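(* Let $\mathcal{A}$ be a separable unital C*-algebra and $\mathcal{B}$ a unital C*-algebra, and let $\mathcal{A}_1\subset\mathcal{A}_2\subset\cdots\subset\mathcal{A}$ be C*-subalgebras with $\mathcal{A}=\left[\bigcup_{n\in\mathbb{N}}\mathcal{A}_n\right]^-$. Suppose $\pi,\rho\in\mathrm{Rep}(\mathcal{A},\mathcal{B})$ are such that for every $n\in\mathbb{N}$: (1) $\rho|_{\mathcal{A}_n}\in\mathcal{U}_{\mathcal{B}}(\pi|_{\mathcal{A}_n})$, i.e. there is a unitary $U\in\mathcal{B}$ with $U^*\pi(a)U=\rho(a)$ for all $a\in\mathcal{A}_n$; and (2) the unitary group of the relative commutant $\rho(\mathcal{A}_n)'\cap\mathcal{B}$ is connected. Then there is a strong internal path from $\pi$ to $\rho$.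
   Context: $\mathrm{Rep}(\mathcal{A},\mathcal{B})$ is the set of unital $*$-homomorphisms $\mathcal{A}\to\mathcal{B}$ with the topology of pointwise norm convergence. $\mathcal{U}_{\mathcal{B}}$ is the unitary group of $\mathcal{B}$ and $\mathcal{U}_{\mathcal{B}}(\pi)=\{U^*\pi(\cdot)U:U\in\mathcal{U}_{\mathcal{B}}\}$. A strong internal path from $\pi$ to $\rho$ is a norm-continuous map $\gamma:[0,1)\to\mathcal{U}_{\mathcal{B}}$ such that $\lim_{t\to1^-}\|\gamma(t)^*\pi(a)\gamma(t)-\rho(a)\|=0$ for every $a\in\mathcal{A}$. *)

theory Defs
  imports "HOL-Analysis.Analysis"
begin

class complex_vector = real_vector +
  fixes scaleC :: "complex \<Rightarrow> 'a \<Rightarrow> 'a"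
  assumes scaleC_add_right: "scaleC c (x + y) = scaleC c x + scaleC c y"
    and scaleC_add_left: "scaleC (b + c) x = scaleC b x + scaleC c x"
    and scaleC_scaleC: "scaleC b (scaleC c x) = scaleC (b * c) x"
    and scaleC_one: "scaleC 1 x = x"
    and scaleR_scaleC: "scaleR r x = scaleC (complex_of_real r) x"

class cstar_algebra = complex_vector + real_normed_algebra_1 + banach +
  fixes adj :: "'a \<Rightarrow> 'a"
  assumes norm_scaleC: "norm (scaleC c x) = cmod c * norm x"
    and scaleC_mult_left: "scaleC c x * y = scaleC c (x * y)"
    and mult_scaleC_right: "x * scaleC c y = scaleC c (x * y)"
    and adj_adj: "adj (adj x) = x"
    and adj_add: "adj (x + y) = adj x + adj y"
    and adj_scaleC: "adj (scaleC c x) = scaleC (cnj c) (adj x)"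
    and adj_mult: "adj (x * y) = adj y * adj x"
    and cstar_identity: "norm (adj x * x) = norm x ^ 2"

definition separable_space :: "'a::metric_space itself \<Rightarrow> bool" where
  "separable_space _ \<longleftrightarrow> (\<exists>D::'a set. countable D \<and> closure D = UNIV)"

definition cstar_subalgebra :: "'a::cstar_algebra set \<Rightarrow> bool" where
  "cstar_subalgebra S \<longleftrightarrow> 0 \<in> S \<and> (\<forall>x\<in>S. \<forall>y\<in>S. x + y \<in> S \<and> x * y \<in> S)
     \<and> (\<forall>c. \<forall>x\<in>S. scaleC c x \<in> S) \<and> (\<forall>x\<in>S. adj x \<in> S) \<and> closed S"

definition Rep :: "('a::cstar_algebra \<Rightarrow> 'b::cstar_algebra) set" where
  "Rep = {\<pi>. (\<forall>x y. \<pi> (x + y) = \<pi> x + \<pi> y) \<and> (\<forall>c x. \<pi> (scaleC c x) = scaleC c (\<pi> x))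
     \<and> (\<forall>x y. \<pi> (x * y) = \<pi> x * \<pi> y) \<and> (\<forall>x. \<pi> (adj x) = adj (\<pi> x)) \<and> \<pi> 1 = 1}"

definition unitary :: "'a::cstar_algebra \<Rightarrow> bool" where
  "unitary u \<longleftrightarrow> adj u * u = 1 \<and> u * adj u = 1"

definition rel_commutant_unitaries :: "('a::cstar_algebra \<Rightarrow> 'b::cstar_algebra) \<Rightarrow> 'a set \<Rightarrow> 'b set" where
  "rel_commutant_unitaries \<rho> S = {u. unitary u \<and> (\<forall>a\<in>S. u * \<rho> a = \<rho> a * u)}"

definition strong_internal_path ::
  "('a::cstar_algebra \<Rightarrow> 'b::cstar_algebra) \<Rightarrow> ('a \<Rightarrow> 'b) \<Rightarrow> (real \<Rightarrow> 'b) \<Rightarrow> bool" where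
  "strong_internal_path \<pi> \<rho> \<gamma> \<longleftrightarrow> continuous_on {0..<1} \<gamma> \<and> (\<forall>t\<in>{0..<1}. unitary (\<gamma> t))
     \<and> (\<forall>a. ((\<lambda>t. norm (adj (\<gamma> t) * \<pi> a * \<gamma> t - \<rho> a)) \<longlongrightarrow> 0) (at_left 1))"

end

theory Submission
  imports Defs
begin

text \<open>Choose unitaries \<open>U\<^sub>n\<close> with \<open>U\<^sub>n\<^sup>* \<pi> U\<^sub>n = \<rho>\<close> on \<open>A\<^sub>n\<close>. Then \<open>U\<^sub>n\<^sup>* U\<^sub>n\<^sub>+\<^sub>1\<close> lies in the
  unitary group \<open>G\<^sub>n\<close> of \<open>\<rho>(A\<^sub>n)' \<inter> B\<close>. A unitary within distance \<open>1\<close> of \<open>1\<close> is joined to \<open>1\<close> by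
  an explicit path that stays in the relative commutant, so \<open>G\<^sub>n\<close> is locally path connected,
  and being connected it is path connected: there are paths \<open>g\<^sub>n\<close> in \<open>G\<^sub>n\<close> from \<open>1\<close> to
  \<open>U\<^sub>n\<^sup>* U\<^sub>n\<^sub>+\<^sub>1\<close>. Concatenating the paths \<open>U\<^sub>n g\<^sub>n\<close> gives a unitary path on \<open>[0,\<infinity>)\<close> whose
  conjugation agrees with \<open>\<rho>\<close> on \<open>A\<^sub>n\<close> from time \<open>n\<close> on. Reparametrising \<open>[0,1)\<close> onto
  \<open>[0,\<infinity>)\<close> and using density of \<open>\<Union>A\<^sub>n\<close> together with the continuity of \<open>*\<close>-homomorphisms
  yields the strong internal path.\<close>

lemma scaleC_minus_left: "scaleC (- c) (x::'a::complex_vector) = - scaleC c x"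
  by (metis add.right_inverse add_eq_0_iff scaleC_add_left scaleR_scaleC scaleR_zero_left of_real_0)

lemma adj_zero [simp]: "adj (0::'a::cstar_algebra) = 0"
  by (metis add_cancel_right_right adj_add)

lemma adj_minus: "adj (- (x::'a::cstar_algebra)) = - adj x"
  by (metis add_eq_0_iff adj_add adj_zero)

lemma adj_diff: "adj ((x::'a::cstar_algebra) - y) = adj x - adj y"
  by (metis adj_add adj_minus diff_conv_add_uminus)

lemma adj_one [simp]: "adj (1::'a::cstar_algebra) = 1"
  by (metis adj_adj adj_mult mult.right_neutral)

lemma adj_scaleR: "adj (scaleR r (x::'a::cstar_algebra)) = scaleR r (adj x)"
  by (simp add: scaleR_scaleC adj_scaleC)

lemma norm_le_norm_adj: "norm (x::'a::cstar_algebra) \<le> norm (adj x)"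
proof (cases "x = 0")
  case False
  have "norm x * norm x = norm (adj x * x)"
    by (simp add: cstar_identity power2_eq_square)
  also have "\<dots> \<le> norm (adj x) * norm x"
    by (rule norm_mult_ineq)
  finally show ?thesis
    using False by simp
qed simp

lemma norm_adj [simp]: "norm (adj (x::'a::cstar_algebra)) = norm x"
  by (metis adj_adj antisym norm_le_norm_adj)

lemma continuous_on_adj [continuous_intros]:
  fixes f :: "'c::topological_space \<Rightarrow> 'a::cstar_algebra"
  assumes "continuous_on S f"
  shows "continuous_on S (\<lambda>x. adj (f x))"
proof -
  have "1-lipschitz_on UNIV (adj :: 'a \<Rightarrow> 'a)"
    by (rule lipschitz_onI) (simp_all add: dist_norm flip: adj_diff)
  then have "continuous_on UNIV (adj :: 'a \<Rightarrow> 'a)"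
    by (rule lipschitz_on_continuous_on)
  then show ?thesis
    using assms by (rule continuous_on_compose2) auto
qed

lemma unitary_one: "unitary (1::'a::cstar_algebra)"
  by (simp add: unitary_def)

lemma unitary_mult: "unitary (u::'a::cstar_algebra) \<Longrightarrow> unitary v \<Longrightarrow> unitary (u * v)"
  unfolding unitary_def adj_mult by (metis mult.assoc mult.left_neutral)

lemma unitary_adj: "unitary (u::'a::cstar_algebra) \<Longrightarrow> unitary (adj u)"
  unfolding unitary_def by (simp add: adj_adj)

lemma norm_unitary:
  assumes "unitary (u::'a::cstar_algebra)"
  shows "norm u = 1"
proof -
  have "norm u ^ 2 = 1 ^ 2"
    using assms cstar_identity[of u] by (simp add: unitary_def)
  then show ?thesis
    using power2_eq_iff_nonneg norm_ge_zero zero_le_one by blast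
qed

section \<open>Inverses in Banach algebras\<close>

lemma norm_square_diff_le:
  fixes x y :: "'a::real_normed_algebra"
  shows "norm (x * x - y * y) \<le> (norm x + norm y) * norm (x - y)"
proof -
  have "x * x - y * y = x * (x - y) + (x - y) * y"
    by (simp add: algebra_simps)
  then have "norm (x * x - y * y) \<le> norm x * norm (x - y) + norm (x - y) * norm y"
    by (simp only:) (intro norm_triangle_le add_mono norm_mult_ineq)
  then show ?thesis
    by (simp add: algebra_simps)
qed

lemma inverse_near_one:
  fixes x :: "'a::{real_normed_algebra_1,banach}"
  assumes small: "norm (1 - x) < 1"
  obtains z where "z * x = 1" "x * z = 1" "norm z \<le> 1 / (1 - norm (1 - x))"
proof -
  define k where "k = 1 - x"
  have "dist (1 + k * a) (1 + k * b) \<le> norm k * dist a b" for a b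
    by (simp add: dist_norm norm_mult_ineq flip: right_diff_distrib)
  then have "\<exists>!z. 1 + k * z = z"
    using small by (intro banach_fix_type[of "norm k"]) (auto simp: k_def)
  then obtain z where z: "1 + k * z = z"
    by blast
  have "dist (1 + a * k) (1 + b * k) \<le> norm k * dist a b" for a b
    by (metis dist_norm add_diff_cancel_left left_diff_distrib mult.commute norm_mult_ineq)
  then have "\<exists>!z. 1 + z * k = z"
    using small by (intro banach_fix_type[of "norm k"]) (auto simp: k_def)
  then obtain z' where z': "1 + z' * k = z'"
    by blast
  have right: "x * z = 1" and left: "z' * x = 1"
    using z z' by (simp_all add: k_def algebra_simps)
  then have "z' = z"
    by (metis mult.assoc mult.left_neutral mult.right_neutral)
  have "norm z \<le> 1 + norm k * norm z"
    by (metis z norm_mult_ineq norm_one norm_triangle_le add_left_mono)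
  then have "norm z \<le> 1 / (1 - norm k)"
    using small by (simp add: k_def field_simps)
  then show thesis
    using that left right \<open>z' = z\<close> by (simp add: k_def)
qed

lemma commute_with_inverse:
  fixes c y z :: "'a::ring_1"
  assumes "c * y = y * c" "z * y = 1" "y * z = 1"
  shows "c * z = z * c"
proof -
  have "c * z = z * (y * c) * z"
    by (metis assms(2) mult.assoc mult_1_left)
  also have "\<dots> = z * (c * y) * z"
    by (simp only: assms(1))
  also have "\<dots> = z * c"
    by (simp add: mult.assoc assms(3))
  finally show ?thesis .
qed

lemma norm_inverse_diff_le:
  fixes x y z w :: "'a::real_normed_algebra_1"
  assumes "z * x = 1" "y * w = 1"
  shows "norm (z - w) \<le> norm z * norm (y - x) * norm w"
proof -
  have "z * (y - x) * w = z * (y * w) - (z * x) * w"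
    by (simp add: algebra_simps)
  then have "z - w = z * (y - x) * w"
    using assms by simp
  then show ?thesis
    by (metis mult_right_mono norm_ge_zero norm_mult_ineq order_trans)
qed

lemma continuous_on_inverses:
  fixes y z :: "'c::topological_space \<Rightarrow> 'a::real_normed_algebra_1"
  assumes cont: "continuous_on T y"
    and inv: "\<And>t. t \<in> T \<Longrightarrow> z t * y t = 1" "\<And>t. t \<in> T \<Longrightarrow> y t * z t = 1"
    and bound: "\<And>t. t \<in> T \<Longrightarrow> norm (z t) \<le> M"
  shows "continuous_on T z"
  unfolding continuous_on_def
proof (intro ballI)
  fix t assume t: "t \<in> T"
  have "(y \<longlongrightarrow> y t) (at t within T)"
    using cont t by (simp add: continuous_on_def)
  then have "((\<lambda>s. M * norm (y t - y s) * M) \<longlongrightarrow> M * norm (y t - y t) * M) (at t within T)"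
    by (intro tendsto_intros)
  then have lim: "((\<lambda>s. M * norm (y t - y s) * M) \<longlongrightarrow> 0) (at t within T)"
    by simp
  have "norm (z s - z t) \<le> M * norm (y t - y s) * M" if s: "s \<in> T" for s
  proof -
    have "norm (z s - z t) \<le> norm (z s) * norm (y t - y s) * norm (z t)"
      using inv s t by (intro norm_inverse_diff_le) auto
    also have "\<dots> \<le> M * norm (y t - y s) * M"
      using bound[OF s] bound[OF t] order_trans[OF norm_ge_zero bound[OF t]]
      by (intro mult_mono mult_right_mono) simp_all
    finally show ?thesis .
  qed
  then have "eventually (\<lambda>s. norm (z s - z t) \<le> M * norm (y t - y s) * M) (at t within T)"
    unfolding eventually_at_filter by (intro always_eventually) blast
  then have "((\<lambda>s. z s - z t) \<longlongrightarrow> 0) (at t within T)"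
    using lim by (rule Lim_null_comparison)
  then show "(z \<longlongrightarrow> z t) (at t within T)"
    by (simp add: LIM_zero_iff)
qed

lemma inverse_shift_near_one:
  fixes w :: "'a::{real_normed_algebra_1,banach}"
  assumes near: "norm (1 - w) < 1" and t: "0 \<le> t"
  obtains z where "z * (scaleR t 1 + w) = 1" "(scaleR t 1 + w) * z = 1"
    "norm z \<le> 1 / (1 - norm (1 - w))"
proof -
  define x where "x = 1 - scaleR (1 / (1 + t)) (1 - w)"
  have "norm (1 - x) = norm (1 - w) / (1 + t)"
    using t by (simp add: x_def)
  also have "\<dots> \<le> norm (1 - w)"
    using t by (simp add: divide_le_eq mult_le_cancel_left1)
  finally have x_near: "norm (1 - x) \<le> norm (1 - w)" .
  obtain z where z: "z * x = 1" "x * z = 1" "norm z \<le> 1 / (1 - norm (1 - x))"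
    using inverse_near_one[of x] x_near near by auto
  have shift: "scaleR t 1 + w = scaleR (1 + t) x"
    using t by (simp add: x_def scaleR_add_left scaleR_diff_right algebra_simps)
  show thesis
  proof (rule that[of "scaleR (1 / (1 + t)) z"])
    show "scaleR (1 / (1 + t)) z * (scaleR t 1 + w) = 1" "(scaleR t 1 + w) * scaleR (1 / (1 + t)) z = 1"
      using t z by (simp_all add: shift)
    have "norm (scaleR (1 / (1 + t)) z) \<le> norm z"
      using t by (simp add: divide_le_eq distrib_left mult_nonneg_nonneg)
    also have "\<dots> \<le> 1 / (1 - norm (1 - w))"
      using z(3) x_near near by (elim order_trans, intro divide_left_mono) auto
    finally show "norm (scaleR (1 / (1 + t)) z) \<le> 1 / (1 - norm (1 - w))" .
  qed
qed

section \<open>Continuity of \<open>*\<close>-homomorphisms\<close>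

lemma rep_add: "\<pi> \<in> Rep \<Longrightarrow> \<pi> (x + y) = \<pi> x + \<pi> y"
  by (simp add: Rep_def)

lemma rep_mult: "\<pi> \<in> Rep \<Longrightarrow> \<pi> (x * y) = \<pi> x * \<pi> y"
  by (simp add: Rep_def)

lemma rep_adj: "\<pi> \<in> Rep \<Longrightarrow> \<pi> (adj x) = adj (\<pi> x)"
  by (simp add: Rep_def)

lemma rep_scaleR: "\<pi> \<in> Rep \<Longrightarrow> \<pi> (scaleR r x) = scaleR r (\<pi> x)"
  by (simp add: Rep_def scaleR_scaleC)

lemma rep_one: "\<pi> \<in> Rep \<Longrightarrow> \<pi> 1 = 1"
  by (simp add: Rep_def)

lemma rep_zero: "\<pi> \<in> Rep \<Longrightarrow> \<pi> 0 = 0"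
  by (metis add_cancel_right_right add_0 rep_add)

lemma rep_diff: "\<pi> \<in> Rep \<Longrightarrow> \<pi> (x - y) = \<pi> x - \<pi> y"
  by (metis diff_add_cancel eq_diff_eq rep_add)

lemma unitary_rep: "\<pi> \<in> Rep \<Longrightarrow> unitary u \<Longrightarrow> unitary (\<pi> u)"
  unfolding unitary_def by (metis rep_adj rep_mult rep_one)

lemma selfadjoint_fixed_point_half_square:
  fixes k h :: "'a::cstar_algebra"
  assumes sa: "adj k = k" and small: "norm k \<le> 1/4" and comm: "k * h = h * k"
  obtains s where "adj s = s" "s * h = h * s" "s + s = k + s * s"
proof -
  define S where "S = {s::'a. norm s \<le> 1/4 \<and> s * h = h * s \<and> adj s = s}"
  define T where "T s = scaleR (1/2) (k + s * s)" for s :: 'a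
  have "closed S"
    unfolding S_def
    by (intro closed_Collect_conj closed_Collect_le closed_Collect_eq continuous_intros)
  have "T ` S \<subseteq> S"
  proof clarify
    fix s assume "s \<in> S"
    then have s: "norm s \<le> 1/4" "s * h = h * s" "adj s = s"
      by (auto simp: S_def)
    have "norm s * norm s \<le> 1/4 * (1/4)"
      using s(1) by (intro mult_mono) auto
    then have "norm (k + s * s) \<le> 1/2"
      using small norm_mult_ineq[of s s] norm_triangle_ineq[of k "s * s"] by linarith
    moreover have "(k + s * s) * h = h * (k + s * s)"
      using s(2) comm by (simp add: algebra_simps) (metis mult.assoc)
    moreover have "adj (k + s * s) = k + s * s"
      using s(3) sa by (simp add: adj_add adj_mult)
    ultimately show "T s \<in> S"
      by (simp add: S_def T_def adj_scaleR)
  qed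
  moreover have "dist (T x) (T y) \<le> 1/4 * dist x y" if "x \<in> S" "y \<in> S" for x y
  proof -
    have "dist (T x) (T y) = 1/2 * norm (x * x - y * y)"
      by (simp add: T_def dist_norm flip: scaleR_diff_right)
    also have "\<dots> \<le> 1/2 * ((norm x + norm y) * norm (x - y))"
      by (simp add: norm_square_diff_le)
    also have "\<dots> \<le> 1/2 * ((1/4 + 1/4) * norm (x - y))"
      using that by (intro mult_left_mono mult_right_mono add_mono) (auto simp: S_def)
    finally show ?thesis
      by (simp add: dist_norm)
  qed
  moreover have "complete S" "S \<noteq> {}"
    using \<open>closed S\<close> by (auto simp: complete_eq_closed S_def intro!: exI[of _ 0])
  ultimately obtain s where "s \<in> S" "T s = s"
    using Banach_fix[of S "1/4" T] by auto
  moreover have "k + s * s = scaleR 2 (T s)"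
    by (simp add: T_def)
  ultimately show thesis
    by (intro that[of s]) (auto simp: S_def scaleR_2)
qed

lemma selfadjoint_sqrt_one_minus_square:
  fixes h :: "'a::cstar_algebra"
  assumes sa: "adj h = h" and small: "norm h \<le> 1/2"
  obtains r where "adj r = r" "r * r = 1 - h * h" "r * h = h * r"
proof -
  have "norm h * norm h \<le> 1/2 * (1/2)"
    using small by (intro mult_mono) auto
  then have "norm (h * h) \<le> 1/4"
    using norm_mult_ineq[of h h] by simp
  then obtain s where s: "adj s = s" "s * h = h * s" "s + s = h * h + s * s"
    using selfadjoint_fixed_point_half_square[of "h * h" h] sa by (auto simp: adj_mult mult.assoc)
  have "(1 - s) * (1 - s) = 1 - (s + s) + s * s"
    by (simp add: algebra_simps)
  then show thesis
    using s by (intro that[of "1 - s"]) (simp_all add: adj_diff algebra_simps)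
qed

lemma selfadjoint_unitary_real_part:
  fixes h :: "'a::cstar_algebra"
  assumes sa: "adj h = h" and small: "norm h \<le> 1/2"
  obtains u where "unitary u" "u + adj u = h + h"
proof -
  obtain r where r: "adj r = r" "r * r = 1 - h * h" "r * h = h * r"
    using selfadjoint_sqrt_one_minus_square[OF sa small] .
  define j where "j = scaleC \<i> r"
  have jj: "j * j = - (r * r)"
    by (simp add: j_def scaleC_mult_left mult_scaleC_right scaleC_scaleC scaleC_minus_left scaleC_one)
  have hj: "h * j = j * h"
    by (simp add: j_def scaleC_mult_left mult_scaleC_right r(3))
  have adj_j: "adj j = - j"
    by (simp add: j_def adj_scaleC r(1) scaleC_minus_left)
  have adj_u: "adj (h + j) = h - j"
    by (simp add: adj_add sa adj_j)
  have "(h - j) * (h + j) = 1" "(h + j) * (h - j) = 1"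
    by (simp_all add: algebra_simps hj jj r(2))
  then show thesis
    by (intro that[of "h + j"]) (simp_all add: unitary_def adj_u)
qed

text \<open>The constant 2 is not sharp, but any bound gives the continuity we need.\<close>

lemma norm_rep_selfadjoint_le:
  fixes h :: "'a::cstar_algebra" and \<pi> :: "'a \<Rightarrow> 'b::cstar_algebra"
  assumes \<pi>: "\<pi> \<in> Rep" and sa: "adj h = h"
  shows "norm (\<pi> h) \<le> 2 * norm h"
proof (cases "h = 0")
  case True
  then show ?thesis
    using rep_zero[OF \<pi>] by simp
next
  case False
  define c where "c = 1 / (2 * norm h)"
  have "c > 0"
    using False by (simp add: c_def)
  obtain u where u: "unitary u" "u + adj u = scaleR c h + scaleR c h"
    using selfadjoint_unitary_real_part[of "scaleR c h"] \<open>c > 0\<close> False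
    by (auto simp: adj_scaleR sa c_def)
  have "scaleR (2 * c) (\<pi> h) = \<pi> u + adj (\<pi> u)"
    using u(2) \<pi> by (metis rep_add rep_adj rep_scaleR scaleR_2 scaleR_scaleR)
  then have "norm (scaleR (2 * c) (\<pi> h)) \<le> 2"
    using norm_triangle_ineq[of "\<pi> u" "adj (\<pi> u)"] norm_unitary[OF unitary_rep[OF \<pi> u(1)]]
    by simp
  then have "2 * c * norm (\<pi> h) \<le> 2"
    using \<open>c > 0\<close> by simp
  then show ?thesis
    using False by (simp add: c_def field_simps)
qed

lemma norm_rep_le:
  fixes x :: "'a::cstar_algebra" and \<pi> :: "'a \<Rightarrow> 'b::cstar_algebra"
  assumes \<pi>: "\<pi> \<in> Rep"
  shows "norm (\<pi> x) \<le> 2 * norm x"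
proof -
  have "norm (\<pi> x) ^ 2 = norm (\<pi> (adj x * x))"
    using \<pi> by (simp add: rep_mult rep_adj cstar_identity)
  also have "\<dots> \<le> 2 * norm (adj x * x)"
    using \<pi> by (rule norm_rep_selfadjoint_le) (simp add: adj_mult adj_adj)
  also have "\<dots> \<le> (2 * norm x) ^ 2"
    by (simp add: cstar_identity power2_eq_square)
  finally show ?thesis
    by (rule power2_le_imp_le) simp
qed

section \<open>Path connectedness of the unitary group of a relative commutant\<close>

lemma unitary_adj_mult_inverse:
  fixes y z :: "'a::cstar_algebra"
  assumes normal: "adj y * y = y * adj y" and inv: "z * y = 1" "y * z = 1"
  shows "unitary (adj y * z)"
proof -
  have adj_inv: "adj z * adj y = 1" "adj y * adj z = 1"
    using inv by (metis adj_mult adj_one)+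
  have comm: "adj y * z = z * adj y"
    using normal inv by (rule commute_with_inverse)
  have "adj (adj y * z) * (adj y * z) = adj z * (y * adj y) * z"
    by (simp add: adj_mult adj_adj mult.assoc)
  also have "\<dots> = (adj z * adj y) * (y * z)"
    by (simp add: normal[symmetric] mult.assoc)
  finally have left: "adj (adj y * z) * (adj y * z) = 1"
    by (simp add: adj_inv(1) inv(2))
  have "(adj y * z) * adj (adj y * z) = (adj y * z) * (adj z * y)"
    by (simp only: adj_mult adj_adj)
  also have "\<dots> = (z * adj y) * (adj z * y)"
    by (simp only: comm)
  also have "\<dots> = z * (adj y * adj z) * y"
    by (simp only: mult.assoc)
  finally have "(adj y * z) * adj (adj y * z) = 1"
    by (simp add: adj_inv(2) inv(1))
  then show ?thesis
    using left by (simp add: unitary_def)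
qed

lemma rel_commutant_unitaries_one: "1 \<in> rel_commutant_unitaries \<rho> S"
  by (simp add: rel_commutant_unitaries_def unitary_one)

lemma rel_commutant_unitaries_mult:
  assumes "u \<in> rel_commutant_unitaries \<rho> S" "v \<in> rel_commutant_unitaries \<rho> S"
  shows "u * v \<in> rel_commutant_unitaries \<rho> S"
  using assms unfolding rel_commutant_unitaries_def
  by (auto simp: unitary_mult) (metis mult.assoc)

lemma rel_commutant_unitaries_adj:
  assumes "u \<in> rel_commutant_unitaries \<rho> S"
  shows "adj u \<in> rel_commutant_unitaries \<rho> S"
proof -
  have u: "unitary u" "\<And>a. a \<in> S \<Longrightarrow> u * \<rho> a = \<rho> a * u"
    using assms by (auto simp: rel_commutant_unitaries_def)
  then have "adj u * \<rho> a = \<rho> a * adj u" if "a \<in> S" for a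
    using commute_with_inverse[of "\<rho> a" u "adj u"] that by (simp add: unitary_def)
  then show ?thesis
    using u by (simp add: rel_commutant_unitaries_def unitary_adj)
qed

lemma path_component_lmult:
  fixes a :: "'a::real_normed_algebra"
  assumes "path_component G x y" and "\<And>g. g \<in> G \<Longrightarrow> a * g \<in> G"
  shows "path_component G (a * x) (a * y)"
proof -
  obtain g where g: "path g" "path_image g \<subseteq> G" "pathstart g = x" "pathfinish g = y"
    using assms(1) unfolding path_component_def by blast
  have "path (\<lambda>t. a * g t)"
    using g(1) unfolding path_def by (intro continuous_intros)
  moreover have "path_image (\<lambda>t. a * g t) \<subseteq> G"
    using g(2) assms(2) unfolding path_image_def by blast
  ultimately show ?thesis
    using g(3,4) unfolding path_component_def pathstart_def pathfinish_def by blast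
qed

lemma adj_shift_mult_inverse_mem_rel_commutant_unitaries:
  fixes \<rho> :: "'a::cstar_algebra \<Rightarrow> 'b::cstar_algebra"
  assumes w: "w \<in> rel_commutant_unitaries \<rho> S"
    and inv: "z * (scaleR t 1 + w) = 1" "(scaleR t 1 + w) * z = 1"
  shows "adj (scaleR t 1 + w) * z \<in> rel_commutant_unitaries \<rho> S"
proof -
  define y where "y = scaleR t 1 + w"
  have wu: "adj w * w = 1" "w * adj w = 1"
    using w by (auto simp: rel_commutant_unitaries_def unitary_def)
  have adj_y: "adj y = scaleR t 1 + adj w"
    by (simp add: y_def adj_add adj_scaleR)
  have "adj y * y = y * adj y"
    unfolding adj_y unfolding y_def by (simp add: algebra_simps wu)
  then have "unitary (adj y * z)"
    using inv unfolding y_def[symmetric] by (rule unitary_adj_mult_inverse)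
  moreover have "adj y * z * \<rho> a = \<rho> a * (adj y * z)" if "a \<in> S" for a
  proof -
    have "w * \<rho> a = \<rho> a * w" "adj w * \<rho> a = \<rho> a * adj w"
      using w rel_commutant_unitaries_adj[OF w] \<open>a \<in> S\<close> by (auto simp: rel_commutant_unitaries_def)
    then have y_comm: "\<rho> a * y = y * \<rho> a" and adj_y_comm: "adj y * \<rho> a = \<rho> a * adj y"
      unfolding adj_y unfolding y_def by (simp_all add: algebra_simps)
    have "\<rho> a * z = z * \<rho> a"
      using y_comm inv unfolding y_def[symmetric] by (rule commute_with_inverse)
    then have "adj y * z * \<rho> a = (adj y * \<rho> a) * z"
      by (simp add: mult.assoc)
    then show ?thesis
      by (simp add: adj_y_comm mult.assoc)
  qed
  ultimately show ?thesis
    by (simp add: rel_commutant_unitaries_def y_def)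
qed

text \<open>Near \<open>1\<close> we use the Cayley-type path \<open>t \<mapsto> w * (adj y\<^sub>t * y\<^sub>t\<^sup>-\<^sup>1) * w\<close> with
  \<open>y\<^sub>t = t + w\<close>: each \<open>y\<^sub>t\<close> is normal and invertible, and the middle factor runs from
  \<open>adj w * adj w\<close> to \<open>adj w\<close>.\<close>

lemma path_component_rel_commutant_unitaries_near_one:
  fixes \<rho> :: "'a::cstar_algebra \<Rightarrow> 'b::cstar_algebra"
  assumes w: "w \<in> rel_commutant_unitaries \<rho> S" and near: "norm (1 - w) < 1"
  shows "path_component (rel_commutant_unitaries \<rho> S) 1 w"
proof -
  let ?G = "rel_commutant_unitaries \<rho> S"
  define y where "y t = scaleR t 1 + w" for t :: real
  have "\<exists>z. z * y t = 1 \<and> y t * z = 1 \<and> norm z \<le> 1 / (1 - norm (1 - w))" if "t \<in> {0..1}" for t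
    using inverse_shift_near_one[OF near, of t] that unfolding y_def by auto
  then obtain z where z: "\<And>t. t \<in> {0..1} \<Longrightarrow> z t * y t = 1" "\<And>t. t \<in> {0..1} \<Longrightarrow> y t * z t = 1"
    and z_bound: "\<And>t. t \<in> {0..1} \<Longrightarrow> norm (z t) \<le> 1 / (1 - norm (1 - w))"
    using bchoice[of "{0..1}"] by (metis (no_types, lifting))
  have wu: "adj w * w = 1" "w * adj w = 1"
    using w by (auto simp: rel_commutant_unitaries_def unitary_def)
  have adj_y: "adj (y t) = scaleR t 1 + adj w" for t
    by (simp add: y_def adj_add adj_scaleR)
  have q: "adj (y t) * z t \<in> ?G" if "t \<in> {0..1}" for t
    using w z[OF that] unfolding y_def by (rule adj_shift_mult_inverse_mem_rel_commutant_unitaries)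
  define p where "p t = w * (adj (y t) * z t) * w" for t
  have "continuous_on {0..1} y"
    unfolding y_def by (intro continuous_intros)
  then have "continuous_on {0..1} z"
    using z z_bound by (rule continuous_on_inverses)
  then have "path p"
    unfolding path_def p_def y_def by (intro continuous_intros)
  moreover have "path_image p \<subseteq> ?G"
    using rel_commutant_unitaries_mult[OF rel_commutant_unitaries_mult[OF w q] w]
    unfolding path_image_def p_def by blast
  moreover have "pathstart p = 1"
  proof -
    have "z 0 * w = 1"
      using z(1)[of 0] by (simp add: y_def)
    then have "z 0 = adj w"
      by (metis mult.assoc mult_1_left mult_1_right wu(2))
    then have "p 0 = (w * adj w) * (adj w * w)"
      by (simp add: p_def adj_y mult.assoc)
    then show ?thesis
      by (simp add: pathstart_def wu)
  qed
  moreover have "pathfinish p = w"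
  proof -
    have "adj (y 1) = adj w * y 1"
      unfolding adj_y unfolding y_def by (simp add: algebra_simps wu)
    then have "adj (y 1) * z 1 = adj w"
      using z(2)[of 1] by (simp add: mult.assoc)
    then show ?thesis
      by (simp add: pathfinish_def p_def wu)
  qed
  ultimately show ?thesis
    unfolding path_component_def by blast
qed

lemma path_connected_rel_commutant_unitaries:
  fixes \<rho> :: "'a::cstar_algebra \<Rightarrow> 'b::cstar_algebra"
  assumes "connected (rel_commutant_unitaries \<rho> S)"
  shows "path_connected (rel_commutant_unitaries \<rho> S)"
  unfolding path_connected_component
proof (intro ballI)
  let ?G = "rel_commutant_unitaries \<rho> S"
  fix a b assume "a \<in> ?G" "b \<in> ?G"
  show "path_component ?G a b"
    using assms \<open>a \<in> ?G\<close> \<open>b \<in> ?G\<close>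
  proof (rule connected_equivalence_relation)
    fix a assume a: "a \<in> ?G"
    have au: "adj a * a = 1" "a * adj a = 1" and "norm (adj a) = 1"
      using a norm_unitary[of a] by (auto simp: rel_commutant_unitaries_def unitary_def)
    have "path_component ?G a x" if x: "x \<in> ?G \<inter> ball a 1" for x
    proof -
      have "norm (1 - adj a * x) = norm (adj a * (a - x))"
        by (simp add: right_diff_distrib au)
      also have "\<dots> < 1"
        using x norm_mult_ineq[of "adj a" "a - x"] \<open>norm (adj a) = 1\<close> by (simp add: dist_norm)
      finally have "norm (1 - adj a * x) < 1" .
      moreover have "adj a * x \<in> ?G"
        using x rel_commutant_unitaries_mult[OF rel_commutant_unitaries_adj[OF a]] by blast
      ultimately have "path_component ?G 1 (adj a * x)"
        by (intro path_component_rel_commutant_unitaries_near_one)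
      then have "path_component ?G (a * 1) (a * (adj a * x))"
        using rel_commutant_unitaries_mult[OF a] by (rule path_component_lmult)
      then show ?thesis
        by (simp add: au flip: mult.assoc)
    qed
    then show "\<exists>T. openin (top_of_set ?G) T \<and> a \<in> T \<and> (\<forall>x\<in>T. path_component ?G a x)"
      using a by (intro exI[of _ "?G \<inter> ball a 1"]) (auto intro: openin_open_Int)
  qed (auto intro: path_component_sym path_component_trans)
qed

section \<open>Construction of the path\<close>

lemma continuous_on_concatenated_paths:
  fixes p :: "nat \<Rightarrow> real \<Rightarrow> 'a::topological_space"
  assumes paths: "\<And>n. path (p n)" and joins: "\<And>n. pathfinish (p n) = pathstart (p (Suc n))"
  shows "continuous_on {0..} (\<lambda>s. p (nat \<lfloor>s\<rfloor>) (frac s))"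
proof -
  define F where "F s = p (nat \<lfloor>s\<rfloor>) (frac s)" for s
  have piece: "F s = p N (s - real N)" if "real N \<le> s" "s \<le> real N + 1" for N s
  proof (cases "s = real N + 1")
    case True
    then have "F s = p (Suc N) 0"
      by (simp add: F_def frac_def nat_add_distrib)
    also have "\<dots> = p N 1"
      using joins[of N] by (simp add: pathstart_def pathfinish_def)
    finally show ?thesis
      using True by simp
  next
    case False
    then have "\<lfloor>s\<rfloor> = int N"
      using that by (simp add: floor_eq_iff)
    then show ?thesis
      by (simp add: F_def frac_def)
  qed
  have "continuous_on {0..real N} F" for N
  proof (induction N)
    case (Suc N)
    have "continuous_on {real N..real N + 1} (\<lambda>s. p N (s - real N))"
      using paths[of N] unfolding path_def
      by (rule continuous_on_compose2) (auto intro!: continuous_intros)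
    then have "continuous_on {real N..real N + 1} F"
      by (rule continuous_on_eq) (auto simp: piece)
    then have "continuous_on ({0..real N} \<union> {real N..real N + 1}) F"
      using Suc.IH by (intro continuous_on_closed_Un) auto
    moreover have "{0..real N} \<union> {real N..real N + 1} = {0..real (Suc N)}"
      by auto
    ultimately show ?case
      by simp
  qed simp
  then have "continuous (at s within {0..}) F" if "0 \<le> s" for s
  proof -
    obtain N where "s < real N"
      using reals_Archimedean2 by blast
    then have "at s within {0..} = at s within {0..real N}"
      by (intro at_within_nhd[of _ "{..<real N}"]) auto
    then show ?thesis
      using \<open>continuous_on {0..real N} F\<close> \<open>0 \<le> s\<close> \<open>s < real N\<close>
      by (simp add: continuous_on_eq_continuous_within)
  qed
  then show ?thesis
    unfolding F_def by (simp add: continuous_on_eq_continuous_within)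
qed

lemma norm_conj_rep_diff_le:
  fixes \<pi> \<rho> :: "'a::cstar_algebra \<Rightarrow> 'b::cstar_algebra"
  assumes \<pi>: "\<pi> \<in> Rep" and \<rho>: "\<rho> \<in> Rep" and u: "unitary u"
    and b: "adj u * \<pi> b * u = \<rho> b"
  shows "norm (adj u * \<pi> a * u - \<rho> a) \<le> 4 * norm (a - b)"
proof -
  have "adj u * \<pi> a * u - \<rho> a = adj u * \<pi> (a - b) * u - \<rho> (a - b)"
    using b by (simp add: rep_diff[OF \<pi>] rep_diff[OF \<rho>] algebra_simps)
  also have "norm \<dots> \<le> norm (adj u) * norm (\<pi> (a - b)) * norm u + norm (\<rho> (a - b))"
    by (intro norm_triangle_le_diff add_mono order_trans[OF norm_mult_ineq]
        mult_right_mono norm_mult_ineq) simp_all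
  also have "\<dots> \<le> 2 * norm (a - b) + 2 * norm (a - b)"
    using norm_unitary[OF u] norm_rep_le[OF \<pi>, of "a - b"] norm_rep_le[OF \<rho>, of "a - b"] by simp
  finally show ?thesis
    by simp
qed

lemma strong_internal_path_reparametrize:
  fixes An :: "nat \<Rightarrow> 'a::cstar_algebra set" and \<pi> \<rho> :: "'a \<Rightarrow> 'b::cstar_algebra"
  assumes \<pi>: "\<pi> \<in> Rep" and \<rho>: "\<rho> \<in> Rep" and dense: "closure (\<Union>n. An n) = UNIV"
    and cont: "continuous_on {0..} F" and unit: "\<And>s. 0 \<le> s \<Longrightarrow> unitary (F s)"
    and conj: "\<And>n s a. real n \<le> s \<Longrightarrow> a \<in> An n \<Longrightarrow> adj (F s) * \<pi> a * F s = \<rho> a"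
  shows "strong_internal_path \<pi> \<rho> (\<lambda>t. F (t / (1 - t)))"
  unfolding strong_internal_path_def
proof (intro conjI ballI allI)
  show "continuous_on {0..<1} (\<lambda>t. F (t / (1 - t)))"
    using cont by (rule continuous_on_compose2) (auto intro!: continuous_intros)
  show "unitary (F (t / (1 - t)))" if "t \<in> {0..<1}" for t
    using that by (intro unit) auto
  fix a
  show "((\<lambda>t. norm (adj (F (t / (1 - t))) * \<pi> a * F (t / (1 - t)) - \<rho> a)) \<longlongrightarrow> 0) (at_left 1)"
  proof (rule tendstoI)
    fix e :: real assume "e > 0"
    then obtain b where "b \<in> (\<Union>n. An n)" "dist b a < e / 4"
      using dense closure_approachable[of a "\<Union>n. An n"] by (metis UNIV_I zero_less_divide_iff zero_less_numeral)
    then obtain n where b: "b \<in> An n" "norm (a - b) < e / 4"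
      by (auto simp: dist_norm norm_minus_commute)
    have "eventually (\<lambda>t. t \<in> {real n / (real n + 1)<..<1}) (at_left (1::real))"
      by (intro eventually_at_left_real) (simp add: field_simps)
    moreover have "norm (adj (F (t / (1 - t))) * \<pi> a * F (t / (1 - t)) - \<rho> a) < e"
      if "t \<in> {real n / (real n + 1)<..<1}" for t
    proof -
      have "real n \<le> t / (1 - t)"
        using that by (simp add: field_simps)
      then have "norm (adj (F (t / (1 - t))) * \<pi> a * F (t / (1 - t)) - \<rho> a) \<le> 4 * norm (a - b)"
        using b(1) of_nat_0_le_iff[of n]
        by (intro norm_conj_rep_diff_le[OF \<pi> \<rho>] unit conj) linarith+
      then show ?thesis
        using b(2) by simp
    qed
    ultimately show "eventually (\<lambda>t. dist (norm (adj (F (t / (1 - t))) * \<pi> a * F (t / (1 - t)) - \<rho> a)) 0 < e)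
        (at_left 1)"
      by (auto elim: eventually_mono)
  qed
qed

lemma adj_mult_mem_rel_commutant_unitaries:
  fixes \<pi> \<rho> :: "'a::cstar_algebra \<Rightarrow> 'b::cstar_algebra"
  assumes u: "unitary u" "\<And>a. a \<in> S \<Longrightarrow> adj u * \<pi> a * u = \<rho> a"
    and v: "unitary v" "\<And>a. a \<in> S \<Longrightarrow> adj v * \<pi> a * v = \<rho> a"
  shows "adj u * v \<in> rel_commutant_unitaries \<rho> S"
proof -
  have uu: "u * (adj u * x) = x" for x
    using u(1) by (simp add: unitary_def flip: mult.assoc)
  have vv: "v * adj v = 1"
    using v(1) by (simp add: unitary_def)
  have "adj u * v * \<rho> a = \<rho> a * (adj u * v)" if "a \<in> S" for a
  proof -
    have "adj u * v * \<rho> a = adj u * (v * adj v) * \<pi> a * v"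
      using v(2)[OF that] by (simp add: mult.assoc)
    also have "\<dots> = (adj u * \<pi> a * u) * (adj u * v)"
      by (simp add: vv uu mult.assoc)
    finally show ?thesis
      using u(2)[OF that] by simp
  qed
  then show ?thesis
    using u(1) v(1) by (simp add: rel_commutant_unitaries_def unitary_mult unitary_adj)
qed

lemma conj_mult_rel_commutant_unitaries:
  fixes \<pi> \<rho> :: "'a::cstar_algebra \<Rightarrow> 'b::cstar_algebra"
  assumes u: "\<And>a. a \<in> S \<Longrightarrow> adj u * \<pi> a * u = \<rho> a"
    and g: "g \<in> rel_commutant_unitaries \<rho> S" and a: "a \<in> S"
  shows "adj (u * g) * \<pi> a * (u * g) = \<rho> a"
proof -
  have "adj g * g = 1" "g * \<rho> a = \<rho> a * g"
    using g a by (auto simp: rel_commutant_unitaries_def unitary_def)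
  then have "adj g * \<rho> a * g = \<rho> a"
    by (metis mult.assoc mult_1_left)
  moreover have "adj (u * g) * \<pi> a * (u * g) = adj g * (adj u * \<pi> a * u) * g"
    by (simp add: adj_mult mult.assoc)
  ultimately show ?thesis
    using u[OF a] by simp
qed

lemma strong_internal_path_of_commutant_paths:
  fixes An :: "nat \<Rightarrow> 'a::cstar_algebra set" and \<pi> \<rho> :: "'a \<Rightarrow> 'b::cstar_algebra"
  assumes \<pi>: "\<pi> \<in> Rep" and \<rho>: "\<rho> \<in> Rep"
    and mono: "\<And>n. An n \<subseteq> An (Suc n)" and dense: "closure (\<Union>n. An n) = UNIV"
    and U: "\<And>n. unitary (U n)" "\<And>n a. a \<in> An n \<Longrightarrow> adj (U n) * \<pi> a * U n = \<rho> a"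
    and g: "\<And>n. path (g n)" "\<And>n. path_image (g n) \<subseteq> rel_commutant_unitaries \<rho> (An n)"
      "\<And>n. pathstart (g n) = 1" "\<And>n. pathfinish (g n) = adj (U n) * U (Suc n)"
  shows "\<exists>\<gamma>. strong_internal_path \<pi> \<rho> \<gamma>"
proof -
  define F where "F s = U (nat \<lfloor>s\<rfloor>) * g (nat \<lfloor>s\<rfloor>) (frac s)" for s
  have g_mem: "g (nat \<lfloor>s\<rfloor>) (frac s) \<in> rel_commutant_unitaries \<rho> (An (nat \<lfloor>s\<rfloor>))" for s
    using g(2) frac_ge_0[of s] frac_lt_1[of s] unfolding path_image_def by fastforce
  have "continuous_on {0..} F"
    unfolding F_def using g(1,3,4) U(1)
    by (intro continuous_on_concatenated_paths) (auto simp: path_def pathstart_def pathfinish_def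
        unitary_def mult.assoc[symmetric] intro!: continuous_intros)
  moreover have "unitary (F s)" for s
    using g_mem U(1) by (simp add: F_def rel_commutant_unitaries_def unitary_mult)
  moreover have "adj (F s) * \<pi> a * F s = \<rho> a" if "real n \<le> s" "a \<in> An n" for n s a
  proof -
    have "a \<in> An (nat \<lfloor>s\<rfloor>)"
      using lift_Suc_mono_le[of An, OF mono le_nat_floor[OF that(1)]] that(2) by blast
    then show ?thesis
      using conj_mult_rel_commutant_unitaries[OF U(2)[where n = "nat \<lfloor>s\<rfloor>"] g_mem[of s]]
      by (simp add: F_def)
  qed
  ultimately have "strong_internal_path \<pi> \<rho> (\<lambda>t. F (t / (1 - t)))"
    using \<pi> \<rho> dense by (intro strong_internal_path_reparametrize)
  then show ?thesis
    by blast
qed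

theorem mainTheorem7:
  fixes An :: "nat \<Rightarrow> 'a::cstar_algebra set"
    and \<pi> \<rho> :: "'a \<Rightarrow> 'b::cstar_algebra"
  assumes "separable_space TYPE('a)"
    and "\<And>n. cstar_subalgebra (An n)"
    and "\<And>n. An n \<subseteq> An (Suc n)"
    and "closure (\<Union>n. An n) = UNIV"
    and "\<pi> \<in> Rep" and "\<rho> \<in> Rep"
    and "\<And>n. \<exists>U. unitary U \<and> (\<forall>a\<in>An n. adj U * \<pi> a * U = \<rho> a)"
    and "\<And>n. connected (rel_commutant_unitaries \<rho> (An n))"
  shows "\<exists>\<gamma>. strong_internal_path \<pi> \<rho> \<gamma>"
proof -
  obtain U where U: "\<And>n. unitary (U n)" "\<And>n a. a \<in> An n \<Longrightarrow> adj (U n) * \<pi> a * U n = \<rho> a"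
    using assms(7) by metis
  have "adj (U n) * U (Suc n) \<in> rel_commutant_unitaries \<rho> (An n)" for n
    using U assms(3) by (intro adj_mult_mem_rel_commutant_unitaries) blast+
  then have "\<exists>g. path g \<and> path_image g \<subseteq> rel_commutant_unitaries \<rho> (An n)
      \<and> pathstart g = 1 \<and> pathfinish g = adj (U n) * U (Suc n)" for n
    using path_connected_rel_commutant_unitaries[OF assms(8)] rel_commutant_unitaries_one
    unfolding path_connected_def by blast
  then obtain g where "\<And>n. path (g n)" "\<And>n. path_image (g n) \<subseteq> rel_commutant_unitaries \<rho> (An n)"
    "\<And>n. pathstart (g n) = 1" "\<And>n. pathfinish (g n) = adj (U n) * U (Suc n)"
    by metis
  then show ?thesis
    using assms(3-6) U by (intro strong_internal_path_of_commutant_paths)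
qed

end
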